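(* Let $X$ be a topological space, $\mathcal{F}$ a filter base on $X$ stable under countable intersections, and $K\subseteq X$ compact. If $\mathcal{F}\vee G_\delta(K):=\{F_0\cap F_1: F_0,F_1\in\mathcal{F}\cup G_\delta(K)\}$ is a filter base, then it is a total filter base stable under countable intersections.
   Context: A filter base on $X$ is a nonempty $\mathcal{F}\subseteq\mathcal{P}(X)$ with $\emptyset\notin\mathcal{F}$ and closed under pairwise intersections; it is stable under countable intersections if for every countable $S\subseteq\mathcal{F}$ there is $H\in\mathcal{F}$ with $H\subseteq\bigcap S$. $G_\delta(K)=\{G\subseteq X: K\subseteq G,\ G\text{ is a countable intersection of open subsets of }X\}$. $ad(\mathcal{F})=\bigcap\{\overline{F}:F\in\mathcal{F}\}$; $\mathcal{F}$ is total if every filter base $\mathcal{H}\supseteq\mathcal{F}$ satisfies $ad(\mathcal{H})\neq\emptyset$. *)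

theory Defs
  imports "HOL-Analysis.Analysis"
begin

definition filter_base :: "'a topology \<Rightarrow> 'a set set \<Rightarrow> bool" where
  "filter_base X F \<longleftrightarrow> F \<noteq> {} \<and> F \<subseteq> Pow (topspace X) \<and> {} \<notin> F \<and>
     (\<forall>A\<in>F. \<forall>B\<in>F. A \<inter> B \<in> F)"

definition countably_stable :: "'a set set \<Rightarrow> bool" where
  "countably_stable F \<longleftrightarrow>
     (\<forall>S. countable S \<and> S \<subseteq> F \<longrightarrow> (\<exists>H\<in>F. H \<subseteq> \<Inter>S))"

text \<open>G_delta(K): countable intersections of open subsets of X containing K.
  The empty intersection is read as X itself.\<close>
definition Gdelta_nbhds :: "'a topology \<Rightarrow> 'a set \<Rightarrow> 'a set set" where
  "Gdelta_nbhds X K = {G. K \<subseteq> G \<and>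
     (\<exists>U. countable U \<and> (\<forall>u\<in>U. openin X u) \<and> G = topspace X \<inter> \<Inter>U)}"

definition adherence :: "'a topology \<Rightarrow> 'a set set \<Rightarrow> 'a set" where
  "adherence X F = topspace X \<inter> \<Inter>{X closure_of A | A. A \<in> F}"

definition total_fb :: "'a topology \<Rightarrow> 'a set set \<Rightarrow> bool" where
  "total_fb X F \<longleftrightarrow> (\<forall>H. filter_base X H \<and> F \<subseteq> H \<longrightarrow> adherence X H \<noteq> {})"

definition join_fb :: "'a set set \<Rightarrow> 'a set set \<Rightarrow> 'a set set" where
  "join_fb F G = {A \<inter> B | A B. A \<in> F \<union> G \<and> B \<in> F \<union> G}"

end

theory Submission
  imports Defs
begin

text \<open>Every open set containing K lies in \<open>G\<^sub>\<delta>(K)\<close>. So if a filter base H containing \<open>G\<^sub>\<delta>(K)\<close>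
  had no adherent point in K, the closures of its members would have empty intersection with
  the compact set K, hence already finitely many of them would; the open complement of these
  finitely many closures then belongs to H and misses the intersection of the corresponding
  members, contradicting that H is a filter base. Countable stability passes to the join
  because a countable family of joined sets is dominated by a countable subfamily of \<open>\<F>\<close>
  together with a countable subfamily of \<open>G\<^sub>\<delta>(K)\<close>, and \<open>G\<^sub>\<delta>(K)\<close> is closed under countable
  intersections.\<close>

lemma filter_base_Inter_finite:
  assumes "filter_base X H" "topspace X \<in> H" "finite C" "C \<subseteq> H"
  shows "topspace X \<inter> \<Inter>C \<in> H"
  using assms(3,4)
proof (induction C rule: finite_induct)
  case empty
  then show ?case using assms(2) by simp
next
  case (insert A C)
  then have "A \<inter> (topspace X \<inter> \<Inter>C) \<in> H"
    using assms(1) unfolding filter_base_def by blast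
  then show ?case by (simp add: Int_left_commute)
qed

lemma adherence_meets_compactin:
  assumes H: "filter_base X H" and K: "compactin X K"
    and nbhds: "\<And>U. openin X U \<Longrightarrow> K \<subseteq> U \<Longrightarrow> U \<in> H"
  shows "K \<inter> adherence X H \<noteq> {}"
proof -
  let ?\<U> = "{X closure_of A | A. A \<in> H}"
  have KX: "K \<subseteq> topspace X"
    using K compactin_subset_topspace by blast
  have closed: "\<forall>C\<in>?\<U>. closedin X C"
    by auto
  have "K \<inter> \<Inter>\<F> \<noteq> {}" if \<F>: "finite \<F>" "\<F> \<subseteq> ?\<U>" for \<F>
  proof
    assume disj: "K \<inter> \<Inter>\<F> = {}"
    obtain C where C: "finite C" "C \<subseteq> H" "\<F> = (\<lambda>A. X closure_of A) ` C"
      using \<F> finite_subset_image[of \<F> "\<lambda>A. X closure_of A" H] by blast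
    have in_closures: "topspace X \<inter> \<Inter>C \<subseteq> \<Inter>\<F>"
      using closure_of_subset_Int[of X] unfolding C(3) by blast
    define W where "W = topspace X - \<Inter>\<F>"
    have "W = (\<Union>A\<in>C. topspace X - X closure_of A)"
      unfolding W_def C(3) by blast
    moreover have "openin X (\<Union>A\<in>C. topspace X - X closure_of A)"
      by (rule openin_Union) (auto intro: openin_diff)
    ultimately have "openin X W"
      by argo
    moreover have "K \<subseteq> W"
      using KX disj unfolding W_def by blast
    ultimately have "W \<in> H"
      by (rule nbhds)
    moreover have "topspace X \<inter> \<Inter>C \<in> H"
      using filter_base_Inter_finite[OF H nbhds[OF openin_topspace KX]] C by blast
    ultimately have "W \<inter> (topspace X \<inter> \<Inter>C) \<in> H"
      using H unfolding filter_base_def by blast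
    moreover have "W \<inter> (topspace X \<inter> \<Inter>C) = {}"
      using in_closures unfolding W_def by blast
    ultimately show False
      using H unfolding filter_base_def by auto
  qed
  then have "K \<inter> \<Inter>?\<U> \<noteq> {}"
    using compactin_fip[THEN iffD1, OF K] closed by blast
  then show ?thesis
    using KX unfolding adherence_def by blast
qed

lemma total_fb_if_open_nbhds:
  assumes "compactin X K" "\<And>U. openin X U \<Longrightarrow> K \<subseteq> U \<Longrightarrow> U \<in> F"
  shows "total_fb X F"
  unfolding total_fb_def
proof (intro allI impI)
  fix H assume H: "filter_base X H \<and> F \<subseteq> H"
  have "K \<inter> adherence X H \<noteq> {}"
  proof (rule adherence_meets_compactin[OF _ assms(1)])
    show "filter_base X H"
      using H by blast
    show "U \<in> H" if "openin X U" "K \<subseteq> U" for U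
      using assms(2)[OF that] H by blast
  qed
  then show "adherence X H \<noteq> {}"
    by blast
qed

lemma openin_in_Gdelta_nbhds:
  assumes "openin X U" "K \<subseteq> U"
  shows "U \<in> Gdelta_nbhds X K"
  unfolding Gdelta_nbhds_def
proof (intro CollectI conjI exI[of _ "{U}"] ballI)
  show "U = topspace X \<inter> \<Inter>{U}"
    using openin_subset[OF assms(1)] by blast
qed (use assms in simp_all)

lemma Gdelta_nbhds_Inter_countable:
  assumes KX: "K \<subseteq> topspace X" and S: "countable S" "S \<subseteq> Gdelta_nbhds X K"
  shows "topspace X \<inter> \<Inter>S \<in> Gdelta_nbhds X K"
proof -
  have "\<forall>G\<in>S. \<exists>V. countable V \<and> (\<forall>u\<in>V. openin X u) \<and> topspace X \<inter> \<Inter>V = G"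
    using S(2) unfolding Gdelta_nbhds_def by (simp add: subset_iff) metis
  then obtain V where V: "\<And>G. G \<in> S \<Longrightarrow>
      countable (V G) \<and> (\<forall>u\<in>V G. openin X u) \<and> topspace X \<inter> \<Inter>(V G) = G"
    by metis
  have "topspace X \<inter> \<Inter>(\<Union>(V ` S)) = topspace X \<inter> (\<Inter>G\<in>S. topspace X \<inter> \<Inter>(V G))"
    by blast
  also have "\<dots> = topspace X \<inter> \<Inter>S"
    using V by simp
  finally have eq: "topspace X \<inter> \<Inter>S = topspace X \<inter> \<Inter>(\<Union>(V ` S))"
    by (rule sym)
  show ?thesis
    unfolding Gdelta_nbhds_def
  proof (intro CollectI conjI exI[of _ "\<Union>(V ` S)"] eq)
    show "countable (\<Union>(V ` S))"
      using S(1) V by blast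
    show "\<forall>u\<in>\<Union>(V ` S). openin X u"
      using V by blast
    show "K \<subseteq> topspace X \<inter> \<Inter>S"
      using KX S(2) unfolding Gdelta_nbhds_def by blast
  qed
qed

lemma countably_stable_Gdelta_nbhds:
  assumes "K \<subseteq> topspace X"
  shows "countably_stable (Gdelta_nbhds X K)"
  unfolding countably_stable_def
proof (intro allI impI)
  fix S assume "countable S \<and> S \<subseteq> Gdelta_nbhds X K"
  then have "topspace X \<inter> \<Inter>S \<in> Gdelta_nbhds X K"
    using Gdelta_nbhds_Inter_countable[OF assms] by blast
  then show "\<exists>H\<in>Gdelta_nbhds X K. H \<subseteq> \<Inter>S"
    by (rule bexI[rotated]) blast
qed

lemma subset_join_fb: "F \<union> G \<subseteq> join_fb F G"
proof
  fix A assume "A \<in> F \<union> G"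
  moreover have "A = A \<inter> A"
    by simp
  ultimately show "A \<in> join_fb F G"
    unfolding join_fb_def by blast
qed

lemma countably_stable_join_fb:
  assumes F: "countably_stable F" and G: "countably_stable G"
  shows "countably_stable (join_fb F G)"
  unfolding countably_stable_def
proof (intro allI impI)
  fix S assume S: "countable S \<and> S \<subseteq> join_fb F G"
  then have "\<forall>s\<in>S. \<exists>a b. s = a \<inter> b \<and> a \<in> F \<union> G \<and> b \<in> F \<union> G"
    unfolding join_fb_def by blast
  then obtain a b where ab: "\<And>s. s \<in> S \<Longrightarrow> s = a s \<inter> b s \<and> a s \<in> F \<union> G \<and> b s \<in> F \<union> G"
    by metis
  define P where "P = a ` S \<union> b ` S"
  have "countable P"
    using S unfolding P_def by auto
  then obtain HF HG where HF: "HF \<in> F" "HF \<subseteq> \<Inter>(P \<inter> F)"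
      and HG: "HG \<in> G" "HG \<subseteq> \<Inter>(P \<inter> G)"
    using F G unfolding countably_stable_def by (meson countable_Int1 inf_le2)
  have "HF \<inter> HG \<subseteq> \<Inter>P"
    using HF HG ab unfolding P_def by blast
  then have "HF \<inter> HG \<subseteq> \<Inter>S"
    using ab unfolding P_def by blast
  moreover have "HF \<inter> HG \<in> join_fb F G"
    using HF HG unfolding join_fb_def by blast
  ultimately show "\<exists>H\<in>join_fb F G. H \<subseteq> \<Inter>S"
    by blast
qed

theorem proposition2p2:
  fixes X :: "'a topology" and F :: "'a set set" and K :: "'a set"
  assumes "filter_base X F"
    and "countably_stable F"
    and "compactin X K"
    and "filter_base X (join_fb F (Gdelta_nbhds X K))"
  shows "total_fb X (join_fb F (Gdelta_nbhds X K))
         \<and> countably_stable (join_fb F (Gdelta_nbhds X K))"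
proof
  show "total_fb X (join_fb F (Gdelta_nbhds X K))"
  proof (rule total_fb_if_open_nbhds[OF assms(3)])
    fix U assume "openin X U" "K \<subseteq> U"
    then have "U \<in> F \<union> Gdelta_nbhds X K"
      using openin_in_Gdelta_nbhds by blast
    then show "U \<in> join_fb F (Gdelta_nbhds X K)"
      by (rule subsetD[OF subset_join_fb])
  qed
  have "countably_stable (Gdelta_nbhds X K)"
    by (rule countably_stable_Gdelta_nbhds[OF compactin_subset_topspace[OF assms(3)]])
  then show "countably_stable (join_fb F (Gdelta_nbhds X K))"
    by (rule countably_stable_join_fb[OF assms(2)])
qed

end
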